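(* Let $n\ge 1$, let $N=2^{n+1}+1$, and let $a$ be an integer; put $x=2^n+a+1$, all vertex indices being taken modulo $N$. Let $D$ be the symmetric cycle of order $N$ on vertices $v_0,v_1,\dots,v_{N-1}$ (i.e. with the arcs $v_iv_{i+1}$ and $v_{i+1}v_i$ for all $i$) together with the two asymmetric arcs $v_0v_{2^n}$ and $v_xv_a$. Let $D'$ be a disjoint copy of $D$, where $v'_i\in V(D')$ is the copy of $v_i\in V(D)$. Then the cyclic Haj\'os identification $H=(D,v_x,v_a)\otimes(D',v'_0,v'_{2^n})$ is the symmetric cycle of order $N$ on $v_0,\dots,v_{N-1}$ together with the two asymmetric arcs $v_0v_{2^n}$ and $v_{2^n+2a+1}v_{2a}$.
   Context: Digraphs are finite, without loops or multiple arcs. An arc $uv$ is symmetric if $vu$ is also an arc, and asymmetric otherwise. For a digraph $D$ and a nonempty independent set $I$ of vertices, identifying $I$ means: delete $I$, add a new vertex $v$ (which may keep the label of one vertex of $I$), and add all arcs from $v$ to $\bigcup_{u\in I}N^+(u)$ and from $\bigcup_{u\in I}N^-(u)$ to $v$. The directed Haj\'os join $(D_1,u_1,v_1)\triangledown(D_2,v_2,u_2)$ of disjoint digraphs $D_1,D_2$ with $u_1v_1\in A(D_1)$, $v_2u_2\in A(D_2)$ is obtained from the disjoint union by deleting the arcs $u_1v_1$ and $v_2u_2$, identifying $v_1$ and $v_2$ into one vertex, and adding the arc $u_1u_2$. Cyclic Haj\'os identification: let $D,D'$ be disjoint digraphs of the same order $N$ with vertex sets $\{v_0,\dots,v_{N-1}\}$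 and $\{v'_0,\dots,v'_{N-1}\}$, and let $v_iv_j\in A(D)$, $v'_kv'_l\in A(D')$ with $i\ne j$, $k\ne l$ and $j-i\ne k-l$. Then $(D,v_i,v_j)\otimes(D',v'_k,v'_l)$ is the digraph obtained from the directed Haj\'os join $(D,v_i,v_j)\triangledown(D',v'_k,v'_l)$ (where $v_j$ and $v'_k$ are identified into $v_j$) by performing, for $r=1,\dots,N-1$, the identification of $v'_{k+r}$ and $v_{j+r}$ into the vertex $v_{j+r}$, indices taken modulo $N$. *)

theory Defs
  imports Main
begin

type_synonym 'a digraph = "'a set \<times> ('a \<times> 'a) set"

text \<open>Identification of a nonempty independent set I into a new vertex w
  (w is either one of the vertices of I, keeping its label, or a fresh vertex).
  Undefined (None) if the preconditions fail.\<close>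
definition identify :: "'a set \<Rightarrow> 'a \<Rightarrow> 'a digraph \<Rightarrow> 'a digraph option" where
  "identify I w G =
    (if I \<noteq> {} \<and> I \<subseteq> fst G \<and> (\<forall>p\<in>I. \<forall>q\<in>I. (p, q) \<notin> snd G)
        \<and> (w \<in> I \<or> w \<notin> fst G)
     then Some ((fst G - I) \<union> {w},
                {(p, q) \<in> snd G. p \<notin> I \<and> q \<notin> I}
                \<union> {(w, q) | u q. u \<in> I \<and> (u, q) \<in> snd G}
                \<union> {(p, w) | p u. u \<in> I \<and> (p, u) \<in> snd G})
     else None)"

text \<open>Directed Hajos join (D1,u1,v1) join (D2,v2,u2); v1 and v2 are identified into v1.\<close>
definition hajos_join ::
  "'a digraph \<Rightarrow> 'a \<Rightarrow> 'a \<Rightarrow> 'a digraph \<Rightarrow> 'a \<Rightarrow> 'a \<Rightarrow> 'a digraph option" where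
  "hajos_join D1 u1 v1 D2 v2 u2 =
    (if fst D1 \<inter> fst D2 = {} \<and> (u1, v1) \<in> snd D1 \<and> (v2, u2) \<in> snd D2
     then map_option (\<lambda>G. (fst G, snd G \<union> {(u1, u2)}))
            (identify {v1, v2} v1
               (fst D1 \<union> fst D2, (snd D1 - {(u1, v1)}) \<union> (snd D2 - {(v2, u2)})))
     else None)"

text \<open>Cyclic Hajos identification (D,v_i,v_j) (x) (D',v'_k,v'_l), where
  v, v' enumerate the vertices of D, D' (indices taken modulo N).\<close>
definition cyclic_hajos ::
  "int \<Rightarrow> (int \<Rightarrow> 'a) \<Rightarrow> 'a digraph \<Rightarrow> int \<Rightarrow> int \<Rightarrow>
          (int \<Rightarrow> 'a) \<Rightarrow> 'a digraph \<Rightarrow> int \<Rightarrow> int \<Rightarrow> 'a digraph option" where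
  "cyclic_hajos N v D i j v' D' k l =
    (if N \<ge> 1 \<and> bij_betw v {0..<N} (fst D) \<and> bij_betw v' {0..<N} (fst D')
        \<and> i mod N \<noteq> j mod N \<and> k mod N \<noteq> l mod N \<and> (j - i) mod N \<noteq> (k - l) mod N
     then fold (\<lambda>r G. Option.bind G
                  (identify {v' ((k + r) mod N), v ((j + r) mod N)} (v ((j + r) mod N))))
            [1..N - 1]
            (hajos_join D (v (i mod N)) (v (j mod N)) D' (v' (k mod N)) (v' (l mod N)))
     else None)"

definition sym_cycle :: "int \<Rightarrow> (int \<Rightarrow> 'a) \<Rightarrow> ('a \<times> 'a) set" where
  "sym_cycle N v =
     {(v i, v ((i + 1) mod N)) | i. 0 \<le> i \<and> i < N}
   \<union> {(v ((i + 1) mod N), v i) | i. 0 \<le> i \<and> i < N}"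

definition cycle_plus_two :: "int \<Rightarrow> (int \<Rightarrow> 'a) \<Rightarrow> int \<Rightarrow> int \<Rightarrow> int \<Rightarrow> int \<Rightarrow> 'a digraph" where
  "cycle_plus_two N v p q s t =
     (v ` {0..<N}, sym_cycle N v \<union> {(v (p mod N), v (q mod N)), (v (s mod N), v (t mod N))})"

end

theory Submission
  imports Defs
begin

(* Identifying an independent set I into w in a digraph whose arcs are the image of a set B
   under a vertex map f gives the image of B under f followed by "I to w". Hence the Hajos join
   (step 0) and the identification steps r = 1, ..., N - 1 produce the image of
   B = (D - v_x v_a) + (D' - v'_0 v'_(2^n)) + v_x v'_(2^n) under the map v'_t to v_(t+a), as long
   as that image has no loops; this is exactly what keeps each identified pair independent.
   Under this map the cycle of D' becomes a rotation of the cycle of D, the new arc v_x v'_(2^n)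
   becomes the cycle arc v_x v_(x-1), the arc v_0 v_(2^n) of D survives, and the arc v'_x v'_a
   of D' becomes v_(2^n+2a+1) v_(2a). *)

lemma identify_image:
  assumes "w \<in> I" "I \<subseteq> f ` V" and indep: "\<forall>(p, q) \<in> B. f p \<in> I \<longrightarrow> f q \<notin> I"
  defines "h \<equiv> \<lambda>z. if f z \<in> I then w else f z"
  shows "identify I w (f ` V, map_prod f f ` B) = Some (h ` V, map_prod h h ` B)"
proof -
  have "(f ` V - I) \<union> {w} = h ` V"
    using assms(1,2) unfolding h_def by (auto simp: image_iff)
  moreover have
    "{(p, q) \<in> map_prod f f ` B. p \<notin> I \<and> q \<notin> I}
     \<union> {(w, q) | u q. u \<in> I \<and> (u, q) \<in> map_prod f f ` B}
     \<union> {(p, w) | p u. u \<in> I \<and> (p, u) \<in> map_prod f f ` B} = map_prod h h ` B"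
    (is "?L = _")
  proof (intro equalityI subsetI)
    fix e assume "e \<in> ?L"
    then obtain p q where pq: "(p, q) \<in> B"
      and "e = (f p, f q) \<and> f p \<notin> I \<and> f q \<notin> I \<or> e = (w, f q) \<and> f p \<in> I
           \<or> e = (f p, w) \<and> f q \<in> I"
      by auto
    moreover have "\<not> (f p \<in> I \<and> f q \<in> I)" using indep pq by auto
    ultimately show "e \<in> map_prod h h ` B"
      unfolding h_def by (auto intro!: image_eqI[OF _ pq])
  next
    fix e assume "e \<in> map_prod h h ` B"
    then obtain p q where "(p, q) \<in> B" "e = (h p, h q)" by auto
    with indep show "e \<in> ?L"
      unfolding h_def by (cases "f p \<in> I"; cases "f q \<in> I") (auto 0 4 simp: image_iff)
  qed
  ultimately show ?thesis
    using assms(1-3) unfolding identify_def by auto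
qed

(* With v_i = Inl i and v'_i = Inr i, the vertex map of the first identification steps:
   v'_(k+s) goes to v_(j+s) for 0 <= s <= r. Here r = 0 is the Hajos join and r = -1 the identity. *)
definition cyclic_merge :: "int \<Rightarrow> int \<Rightarrow> int \<Rightarrow> int \<Rightarrow> int + int \<Rightarrow> int + int" where
  "cyclic_merge N j k r z = (case z of
      Inl s \<Rightarrow> Inl s
    | Inr t \<Rightarrow> if 0 \<le> t \<and> t < N \<and> (t - k) mod N \<le> r then Inl ((j + t - k) mod N) else Inr t)"

lemma cyclic_merge_Inl [simp]: "cyclic_merge N j k r (Inl s) = Inl s"
  by (simp add: cyclic_merge_def)

lemma cyclic_merge_last_Inr:
  "0 \<le> t \<Longrightarrow> t < N \<Longrightarrow> cyclic_merge N j k (N - 1) (Inr t) = Inl ((j + t - k) mod N)"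
  by (simp add: cyclic_merge_def)

lemma cyclic_merge_minus_one:
  assumes "0 < N"
  shows "cyclic_merge N j k (-1) = id"
proof -
  have "\<not> (t - k) mod N \<le> -1" for t using pos_mod_sign[OF assms, of "t - k"] by linarith
  then show ?thesis by (simp add: fun_eq_iff cyclic_merge_def split: sum.split)
qed

lemma cyclic_merge_step:
  assumes "0 \<le> r" "r < N"
  shows "(if cyclic_merge N j k (r - 1) z \<in> {Inr ((k + r) mod N), Inl ((j + r) mod N)}
          then Inl ((j + r) mod N) else cyclic_merge N j k (r - 1) z)
         = cyclic_merge N j k r z"
proof (cases z)
  case (Inr t)
  show ?thesis
  proof (cases "0 \<le> t \<and> t < N \<and> (t - k) mod N = r")
    case True
    then have "t = (k + r) mod N" "(j + t - k) mod N = (j + r) mod N"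
      by (auto simp: mod_simps add_diff_eq)
    with True Inr show ?thesis by (auto simp: cyclic_merge_def)
  next
    case False
    have "(j + t - k) mod N \<noteq> (j + r) mod N" if "0 \<le> t" "t < N" "(t - k) mod N < r"
    proof
      assume "(j + t - k) mod N = (j + r) mod N"
      then have "(t - k) mod N = r mod N" by (simp add: mod_eq_dvd_iff algebra_simps)
      with that assms show False by simp
    qed
    moreover have "t \<noteq> (k + r) mod N \<or> \<not> (0 \<le> t \<and> t < N)" using False assms
      by (auto simp: mod_simps)
    ultimately show ?thesis using False Inr assms
      by (auto simp: cyclic_merge_def)
  qed
qed (simp add: cyclic_merge_def)

lemma cyclic_merge_last_on_merged:
  assumes "0 \<le> r" "r < N"
    and "cyclic_merge N j k (r - 1) z \<in> {Inr ((k + r) mod N), Inl ((j + r) mod N)}"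
  shows "cyclic_merge N j k (N - 1) z = Inl ((j + r) mod N)"
proof (cases z)
  case (Inr t)
  have "0 < N" using assms(1,2) by simp
  then have "(t - k) mod N \<le> N - 1" by simp
  moreover have "(j + (k + r) mod N - k) mod N = (j + r) mod N"
    using mod_add_right_eq[of "j - k" "k + r" N] by (simp add: algebra_simps)
  ultimately show ?thesis using assms Inr
    by (auto simp: cyclic_merge_def split: if_splits)
qed (use assms in \<open>simp add: cyclic_merge_def\<close>)

lemma identify_cyclic_merge:
  fixes N j k r :: int and B :: "((int + int) \<times> (int + int)) set"
  defines "V \<equiv> Inl ` {0..<N} \<union> Inr ` {0..<N}" and "g \<equiv> cyclic_merge N j k"
  assumes "0 \<le> r" "r < N" and loopless: "irrefl (map_prod (g (N - 1)) (g (N - 1)) ` B)"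
  shows "identify {Inr ((k + r) mod N), Inl ((j + r) mod N)} (Inl ((j + r) mod N))
           (g (r - 1) ` V, map_prod (g (r - 1)) (g (r - 1)) ` B)
         = Some (g r ` V, map_prod (g r) (g r) ` B)"
proof -
  let ?I = "{Inr ((k + r) mod N), Inl ((j + r) mod N)}"
  have "Inr ((k + r) mod N) = g (r - 1) (Inr ((k + r) mod N))"
    using assms(3,4) by (simp add: g_def cyclic_merge_def mod_simps)
  moreover have "Inl ((j + r) mod N) = g (r - 1) (Inl ((j + r) mod N))"
    by (simp add: g_def)
  moreover have "Inr ((k + r) mod N) \<in> V" "Inl ((j + r) mod N) \<in> V"
    using assms(3,4) by (auto simp: V_def)
  ultimately have sub: "?I \<subseteq> g (r - 1) ` V"
    by (metis empty_subsetI image_eqI insert_subset)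
  have indep: "\<forall>(p, q) \<in> B. g (r - 1) p \<in> ?I \<longrightarrow> g (r - 1) q \<notin> ?I"
  proof (intro ballI impI notI, clarify)
    fix p q assume "(p, q) \<in> B" "g (r - 1) p \<in> ?I" "g (r - 1) q \<in> ?I"
    then have "(g (N - 1) p, g (N - 1) p) \<in> map_prod (g (N - 1)) (g (N - 1)) ` B"
      using cyclic_merge_last_on_merged[OF assms(3,4)] unfolding g_def by (metis map_prod_imageI)
    with loopless show False by (simp add: irrefl_def)
  qed
  have merge: "(\<lambda>z. if g (r - 1) z \<in> ?I then Inl ((j + r) mod N) else g (r - 1) z) = g r"
    using cyclic_merge_step[OF assms(3,4)] unfolding g_def by blast
  show ?thesis
    using identify_image[of "Inl ((j + r) mod N)" ?I, OF _ sub indep] unfolding merge by simp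
qed

lemma fold_identify_cyclic_merge:
  fixes N j k r :: int and B
  defines "V \<equiv> Inl ` {0..<N} \<union> Inr ` {0..<N}" and "g \<equiv> cyclic_merge N j k"
  assumes "0 \<le> r" "r < N" and loopless: "irrefl (map_prod (g (N - 1)) (g (N - 1)) ` B)"
  shows "fold (\<lambda>r G. Option.bind G
                (identify {Inr ((k + r) mod N), Inl ((j + r) mod N)} (Inl ((j + r) mod N))))
           [1..r] (Some (g 0 ` V, map_prod (g 0) (g 0) ` B))
         = Some (g r ` V, map_prod (g r) (g r) ` B)"
  using assms(3,4)
proof (induction r rule: int_ge_induct)
  case (step r)
  have "[1..r + 1] = [1..r] @ [r + 1]"
    using step.hyps upto_rec2[of 1 "r + 1"] by simp
  with step identify_cyclic_merge[where r = "r + 1" and B = B] loopless show ?case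
    unfolding V_def g_def by simp
qed simp

lemma hajos_join_cyclic_merge:
  fixes N i j k l :: int and A A' :: "((int + int) \<times> (int + int)) set"
  defines "V \<equiv> Inl ` {0..<N} \<union> Inr ` {0..<N}" and "g \<equiv> cyclic_merge N j k"
    and "B \<equiv> (A - {(Inl (i mod N), Inl (j mod N))}) \<union> (A' - {(Inr (k mod N), Inr (l mod N))})
             \<union> {(Inl (i mod N), Inr (l mod N))}"
  assumes N: "1 \<le> N" and kl: "k mod N \<noteq> l mod N"
    and arcs: "(Inl (i mod N), Inl (j mod N)) \<in> A" "(Inr (k mod N), Inr (l mod N)) \<in> A'"
    and loopless: "irrefl (map_prod (g (N - 1)) (g (N - 1)) ` B)"
  shows "hajos_join (Inl ` {0..<N}, A) (Inl (i mod N)) (Inl (j mod N))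
           (Inr ` {0..<N}, A') (Inr (k mod N)) (Inr (l mod N))
         = Some (g 0 ` V, map_prod (g 0) (g 0) ` B)"
proof -
  define A\<^sub>1 where "A\<^sub>1 = (A - {(Inl (i mod N), Inl (j mod N))}) \<union> (A' - {(Inr (k mod N), Inr (l mod N))})"
  have "A\<^sub>1 \<subseteq> B" unfolding A\<^sub>1_def B_def by blast
  then have "irrefl (map_prod (g (N - 1)) (g (N - 1)) ` A\<^sub>1)"
    using loopless by (meson image_mono irreflD irreflI subsetD)
  then have "identify {Inl (j mod N), Inr (k mod N)} (Inl (j mod N)) (V, A\<^sub>1)
    = Some (g 0 ` V, map_prod (g 0) (g 0) ` A\<^sub>1)"
    using identify_cyclic_merge[where N = N and j = j and k = k and r = 0 and B = A\<^sub>1] N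
    unfolding V_def g_def by (simp add: insert_commute cyclic_merge_minus_one map_prod.id)
  moreover have "g 0 (Inr (l mod N)) = Inr (l mod N)"
  proof -
    have "(l mod N - k) mod N = (l - k) mod N" by (rule mod_diff_left_eq)
    moreover have "(l - k) mod N \<noteq> 0"
      using kl by (simp add: mod_eq_dvd_iff mod_eq_0_iff_dvd dvd_diff_commute)
    moreover have "0 \<le> (l - k) mod N" using N by simp
    ultimately show ?thesis by (simp add: g_def cyclic_merge_def)
  qed
  moreover have "Inl ` {0..<N} \<inter> Inr ` {0..<N} = {}" by blast
  ultimately show ?thesis
    using arcs unfolding hajos_join_def B_def A\<^sub>1_def V_def by (simp add: g_def)
qed

lemma cyclic_hajos_Inl_Inr_eq_image:
  fixes N i j k l :: int and A A' :: "((int + int) \<times> (int + int)) set"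
  defines "\<Phi> \<equiv> cyclic_merge N j k (N - 1)"
    and "B \<equiv> (A - {(Inl (i mod N), Inl (j mod N))}) \<union> (A' - {(Inr (k mod N), Inr (l mod N))})
             \<union> {(Inl (i mod N), Inr (l mod N))}"
  assumes N: "1 \<le> N" and ij: "i mod N \<noteq> j mod N" and kl: "k mod N \<noteq> l mod N"
    and arcs: "(Inl (i mod N), Inl (j mod N)) \<in> A" "(Inr (k mod N), Inr (l mod N)) \<in> A'"
    and loopless: "irrefl (map_prod \<Phi> \<Phi> ` B)"
  shows "cyclic_hajos N Inl (Inl ` {0..<N}, A) i j Inr (Inr ` {0..<N}, A') k l
         = Some (Inl ` {0..<N}, map_prod \<Phi> \<Phi> ` B)"
proof -
  define V where "V = Inl ` {0..<N} \<union> Inr ` {0..<N}"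
  define g where "g = cyclic_merge N j k"
  (* the side condition j - i <> k - l of the definition: the new arc v_i v'_l is not a loop *)
  have "(j - i) mod N \<noteq> (k - l) mod N"
  proof
    assume "(j - i) mod N = (k - l) mod N"
    then have "(j - k + l) mod N = i mod N"
      by (simp add: mod_eq_dvd_iff algebra_simps)
    then have "(j + l mod N - k) mod N = i mod N"
      using mod_add_right_eq[of "j - k" l N] by (simp add: algebra_simps)
    then have "map_prod \<Phi> \<Phi> (Inl (i mod N), Inr (l mod N)) = (Inl (i mod N), Inl (i mod N))"
      using N by (simp add: \<Phi>_def cyclic_merge_last_Inr)
    moreover have "(Inl (i mod N), Inr (l mod N)) \<in> B" by (simp add: B_def)
    ultimately have "(Inl (i mod N), Inl (i mod N)) \<in> map_prod \<Phi> \<Phi> ` B"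
      by (metis image_eqI)
    with loopless show False by (simp add: irrefl_def)
  qed
  then have "cyclic_hajos N Inl (Inl ` {0..<N}, A) i j Inr (Inr ` {0..<N}, A') k l
    = fold (\<lambda>r G. Option.bind G
                (identify {Inr ((k + r) mod N), Inl ((j + r) mod N)} (Inl ((j + r) mod N))))
           [1..N - 1]
           (hajos_join (Inl ` {0..<N}, A) (Inl (i mod N)) (Inl (j mod N))
              (Inr ` {0..<N}, A') (Inr (k mod N)) (Inr (l mod N)))"
    using N ij kl unfolding cyclic_hajos_def by (simp add: bij_betw_def)
  also have "hajos_join (Inl ` {0..<N}, A) (Inl (i mod N)) (Inl (j mod N))
              (Inr ` {0..<N}, A') (Inr (k mod N)) (Inr (l mod N))
    = Some (g 0 ` V, map_prod (g 0) (g 0) ` B)"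
    using hajos_join_cyclic_merge[OF N kl arcs loopless[unfolded \<Phi>_def B_def]]
    unfolding V_def g_def B_def .
  also have "fold (\<lambda>r G. Option.bind G
                (identify {Inr ((k + r) mod N), Inl ((j + r) mod N)} (Inl ((j + r) mod N))))
           [1..N - 1] (Some (g 0 ` V, map_prod (g 0) (g 0) ` B))
    = Some (g (N - 1) ` V, map_prod \<Phi> \<Phi> ` B)"
    using fold_identify_cyclic_merge[where r = "N - 1" and B = B] N loopless
    unfolding V_def g_def \<Phi>_def by simp
  also have "g (N - 1) ` V = Inl ` {0..<N}"
    using N unfolding g_def V_def image_Un
    by (auto simp: cyclic_merge_last_Inr image_image)
  finally show ?thesis .
qed

lemma sym_cycle_altdef:
  "sym_cycle N v = (\<lambda>i. (v i, v ((i + 1) mod N))) ` {0..<N} \<union> (\<lambda>i. (v ((i + 1) mod N), v i)) ` {0..<N}"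
  unfolding sym_cycle_def by auto

lemma sym_cycle_image: "map_prod f f ` sym_cycle N v = sym_cycle N (f \<circ> v)"
  by (simp add: sym_cycle_altdef image_Un image_image)

lemma sym_cycle_cong:
  assumes "\<And>t. 0 \<le> t \<Longrightarrow> t < N \<Longrightarrow> v t = w t"
  shows "sym_cycle N v = sym_cycle N w"
proof -
  have "v i = w i \<and> v ((i + 1) mod N) = w ((i + 1) mod N)" if "i \<in> {0..<N}" for i
    using that assms by simp
  then show ?thesis
    unfolding sym_cycle_altdef by (metis (no_types, lifting) image_cong)
qed

lemma sym_cycle_rotate: "sym_cycle N (\<lambda>t. v ((c + t) mod N)) = sym_cycle N v"
proof -
  have shift: "(c + (i + 1) mod N) mod N = ((c + i) mod N + 1) mod N" for i
    by (simp add: mod_simps ac_simps)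
  have range: "(\<lambda>i. (c + i) mod N) ` {0..<N} = {0..<N}"
  proof
    show "(\<lambda>i. (c + i) mod N) ` {0..<N} \<subseteq> {0..<N}" by auto
    show "{0..<N} \<subseteq> (\<lambda>i. (c + i) mod N) ` {0..<N}"
    proof
      fix i' assume "i' \<in> {0..<N}"
      then show "i' \<in> (\<lambda>i. (c + i) mod N) ` {0..<N}"
        by (intro image_eqI[of _ _ "(i' - c) mod N"]) (auto simp: mod_simps)
    qed
  qed
  have "sym_cycle N v = (\<lambda>i. (v i, v ((i + 1) mod N))) ` (\<lambda>i. (c + i) mod N) ` {0..<N}
      \<union> (\<lambda>i. (v ((i + 1) mod N), v i)) ` (\<lambda>i. (c + i) mod N) ` {0..<N}"
    unfolding sym_cycle_altdef range ..
  then show ?thesis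
    unfolding sym_cycle_altdef[of N "\<lambda>t. v ((c + t) mod N)"] shift image_image by (rule sym)
qed

lemma sym_cycle_iff:
  assumes "inj v"
  shows "(v p, v q) \<in> sym_cycle N v \<longleftrightarrow>
           0 \<le> p \<and> p < N \<and> 0 \<le> q \<and> q < N \<and> (q = (p + 1) mod N \<or> p = (q + 1) mod N)"
  by (auto simp: sym_cycle_altdef inj_eq[OF assms])

lemma mod_add_neq:
  fixes x d N :: int
  assumes "0 < d" "d < N"
  shows "(x + d) mod N \<noteq> x mod N"
  using zdvd_not_zless[OF assms] by (simp add: mod_eq_dvd_iff)

lemma irrefl_sym_cycle:
  assumes "inj v" "2 \<le> N"
  shows "irrefl (sym_cycle N v)"
proof (rule irreflI)
  fix z
  have "(i + 1) mod N \<noteq> i" "i \<noteq> (i + 1) mod N" if "0 \<le> i" "i < N" for i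
    using mod_add_neq[of 1 N i] that assms(2) by simp_all
  then show "(z, z) \<notin> sym_cycle N v"
    by (auto simp: sym_cycle_altdef inj_eq[OF assms(1)])
qed

lemma irrefl_cycle_plus_two:
  assumes "inj v" "2 \<le> N" "p mod N \<noteq> q mod N" "s mod N \<noteq> t mod N"
  shows "irrefl (snd (cycle_plus_two N v p q s t))"
  using irrefl_sym_cycle[OF assms(1,2)] assms(3,4) inj_eq[OF assms(1)]
  unfolding cycle_plus_two_def irrefl_def by auto

lemma cycle_plus_two_join_arcs:
  fixes N m a :: int
  assumes N: "N = 2 * m + 1" and m: "2 \<le> m" and a: "a mod N \<noteq> m"
  shows "(snd (cycle_plus_two N Inl 0 m (m + a + 1) a) - {(Inl ((m + a + 1) mod N), Inl (a mod N))})
         \<union> (snd (cycle_plus_two N Inr 0 m (m + a + 1) a) - {(Inr 0, Inr m)})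
         \<union> {(Inl ((m + a + 1) mod N), Inr m)}
       = sym_cycle N Inl \<union> sym_cycle N Inr
         \<union> {(Inl 0, Inl m), (Inr ((m + a + 1) mod N), Inr (a mod N)), (Inl ((m + a + 1) mod N), Inr m)}"
proof -
  define x where "x = (m + a + 1) mod N"
  define y where "y = a mod N"
  have "0 < N" using N m by simp
  have "(Inl x, Inl y) \<notin> sym_cycle N Inl"
  proof -
    have "(x + 1) mod N \<noteq> y"
      using mod_add_neq[of "m + 2" N a] N m by (simp add: x_def y_def mod_simps ac_simps)
    moreover have "(y + 1) mod N \<noteq> x"
      using mod_add_neq[of m N "a + 1"] N m by (simp add: x_def y_def mod_simps ac_simps)
    ultimately show ?thesis by (auto simp: sym_cycle_iff)
  qed
  moreover have "(Inr 0, Inr m) \<notin> sym_cycle N Inr"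
    using N m by (auto simp: sym_cycle_iff)
  moreover have "m mod N = m" using N m by simp
  ultimately show ?thesis
    using a unfolding cycle_plus_two_def x_def[symmetric] y_def[symmetric] by auto
qed

lemma cyclic_merge_join_arcs:
  fixes N m a :: int
  assumes "0 \<le> m" "m < N"
  defines "\<Phi> \<equiv> cyclic_merge N a 0 (N - 1)"
  shows "map_prod \<Phi> \<Phi> ` (sym_cycle N Inl \<union> sym_cycle N Inr
           \<union> {(Inl 0, Inl m), (Inr ((m + a + 1) mod N), Inr (a mod N)), (Inl ((m + a + 1) mod N), Inr m)})
         = snd (cycle_plus_two N Inl 0 m (m + 2 * a + 1) (2 * a))"
proof -
  define x where "x = (m + a + 1) mod N"
  define y where "y = a mod N"
  have "0 \<le> x" "x < N" "0 \<le> y" "y < N" using assms(1,2) by (simp_all add: x_def y_def)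
  have \<Phi>_Inl: "\<Phi> (Inl s) = Inl s" for s by (simp add: \<Phi>_def)
  then have cycle_Inl: "map_prod \<Phi> \<Phi> ` sym_cycle N Inl = sym_cycle N Inl"
    by (simp add: sym_cycle_image comp_def)
  have "sym_cycle N (\<Phi> \<circ> Inr) = sym_cycle N (\<lambda>t. Inl ((a + t) mod N))"
    by (rule sym_cycle_cong) (simp add: \<Phi>_def cyclic_merge_last_Inr)
  then have cycle_Inr: "map_prod \<Phi> \<Phi> ` sym_cycle N Inr = sym_cycle N Inl"
    by (simp add: sym_cycle_image sym_cycle_rotate)
  have target: "\<Phi> (Inr x) = Inl ((m + 2 * a + 1) mod N)" "\<Phi> (Inr y) = Inl (2 * a mod N)"
    using \<open>0 \<le> x\<close> \<open>x < N\<close> \<open>0 \<le> y\<close> \<open>y < N\<close>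
    by (simp_all add: \<Phi>_def cyclic_merge_last_Inr x_def y_def mod_simps algebra_simps mult_2)
  have "x = ((a + m) mod N + 1) mod N" by (simp add: x_def mod_simps ac_simps)
  then have glued: "(\<Phi> (Inl x), \<Phi> (Inr m)) \<in> sym_cycle N Inl"
    using assms(1,2) \<open>0 \<le> x\<close> \<open>x < N\<close>
    by (simp add: \<Phi>_def cyclic_merge_last_Inr sym_cycle_iff)
  have "m mod N = m" using assms(1,2) by simp
  then show ?thesis
    unfolding x_def[symmetric] y_def[symmetric] image_Un cycle_Inl cycle_Inr
    using \<Phi>_Inl target glued by (auto simp: cycle_plus_two_def)
qed

lemma cycle_plus_two_eq: "cycle_plus_two N v p q s t = (v ` {0..<N}, snd (cycle_plus_two N v p q s t))"
  by (simp add: cycle_plus_two_def)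

lemma cyclic_hajos_cycle_plus_two:
  fixes N m a :: int
  assumes N: "N = 2 * m + 1" and m: "2 \<le> m" and a: "a mod N \<noteq> m"
  shows "cyclic_hajos N Inl (cycle_plus_two N Inl 0 m (m + a + 1) a) (m + a + 1) a
           Inr (cycle_plus_two N Inr 0 m (m + a + 1) a) 0 m
         = Some (cycle_plus_two N Inl 0 m (m + 2 * a + 1) (2 * a))"
    (is "cyclic_hajos N Inl ?D _ _ Inr ?D' _ _ = Some ?H")
proof -
  have m_mod: "m mod N = m" using N m by simp
  have merged: "map_prod (cyclic_merge N a 0 (N - 1)) (cyclic_merge N a 0 (N - 1)) `
      ((snd ?D - {(Inl ((m + a + 1) mod N), Inl (a mod N))})
       \<union> (snd ?D' - {(Inr (0 mod N), Inr (m mod N))}) \<union> {(Inl ((m + a + 1) mod N), Inr (m mod N))})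
    = snd ?H"
    using cycle_plus_two_join_arcs[OF N m a] cyclic_merge_join_arcs[of m N a] m_mod N m by simp
  have "irrefl (snd ?H)"
  proof (rule irrefl_cycle_plus_two)
    show "2 \<le> N" "0 mod N \<noteq> m mod N" using N m m_mod by simp_all
    show "(m + 2 * a + 1) mod N \<noteq> 2 * a mod N"
      using mod_add_neq[of "m + 1" N "2 * a"] N m by (simp add: ac_simps)
  qed simp
  moreover have "(m + a + 1) mod N \<noteq> a mod N"
    using mod_add_neq[of "m + 1" N a] N m by (simp add: ac_simps)
  moreover have "(Inl ((m + a + 1) mod N), Inl (a mod N)) \<in> snd ?D"
    "(Inr (0 mod N), Inr (m mod N)) \<in> snd ?D'"
    by (simp_all add: cycle_plus_two_def)
  ultimately have "cyclic_hajos N Inl (Inl ` {0..<N}, snd ?D) (m + a + 1) a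
      Inr (Inr ` {0..<N}, snd ?D') 0 m = Some (Inl ` {0..<N}, snd ?H)"
    using cyclic_hajos_Inl_Inr_eq_image[of N "m + a + 1" a 0 m "snd ?D" "snd ?D'", unfolded merged]
      N m m_mod by simp
  then show ?thesis
    by (subst (1 2 3) cycle_plus_two_eq)
qed

theorem lemma1:
  fixes n :: nat and a :: int
  assumes "n \<ge> 1"
    and "a mod (2 ^ (n + 1) + 1) \<noteq> 2 ^ n"
  shows "cyclic_hajos (2 ^ (n + 1) + 1)
           (Inl :: int \<Rightarrow> int + int) (cycle_plus_two (2 ^ (n + 1) + 1) Inl 0 (2 ^ n) (2 ^ n + a + 1) a)
           (2 ^ n + a + 1) a
           Inr (cycle_plus_two (2 ^ (n + 1) + 1) Inr 0 (2 ^ n) (2 ^ n + a + 1) a)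
           0 (2 ^ n)
         = Some (cycle_plus_two (2 ^ (n + 1) + 1) Inl 0 (2 ^ n) (2 ^ n + 2 * a + 1) (2 * a))"
proof (rule cyclic_hajos_cycle_plus_two)
  show "(2::int) ^ (n + 1) + 1 = 2 * 2 ^ n + 1" by simp
  have "(2::int) ^ 1 \<le> 2 ^ n" using assms(1) by (rule power_increasing) simp
  then show "(2::int) \<le> 2 ^ n" by simp
qed fact

end
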